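(* Let $\gamma\in F=PSL(2,\mathbb Z)$ be a hyperbolic element (i.e. acting as a hyperbolic isometry of $\mathbb H^2$). Then there exist two sequences $\{U_n^+\}_{n\in\mathbb N}$ and $\{U_n^-\}_{n\in\mathbb N}$ of connected subsets of $B$ such that $\{U_n^+\}$ is a vanishing sequence for the action of $\gamma$ on $B$, $\{U_n^-\}$ is a vanishing sequence for $\gamma^{-1}$, and $U_0^+\cap U_0^-=\emptyset$.
   Context: $B=\mathbb{QP}^1$ is the vertex set of the Farey tessellation of $\mathbb H^2$, with the action of $F=PSL(2,\mathbb Z)$, and $T$ is the dual trivalent tree. A quadribone is the set of four vertices of two adjacent ideal triangles (corresponding to an edge of $T$); $A\subset B$ is connected if it is a union of quadribones whose corresponding edges form a connected subset of $T$. For a map $\gamma:X\to X$ of a topological space (here $X=B$ with the discrete topology), a sequence of non-empty subsets $\{V_n\}$ is a vanishing sequence for $\gamma$ if $V_{n+1}\subset V_n$, $\bigcap_n V_n=\emptyset$, and for every compact $K\subset X$ and every $n$ there exists $p\in\mathbb N$ with $\gamma^p(K)\subset V_n$. *)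

theory Defs
  imports Main
begin

text \<open>Points of QP^1 are represented by primitive integer vectors (p,q), normalized so that
  q > 0, or (p,q) = (1,0) (the point at infinity). (p,q) stands for p/q.\<close>

definition qp1 :: "(int \<times> int) set" where
  "qp1 = {(p,q). coprime p q \<and> (q > 0 \<or> (q = 0 \<and> p = 1))}"

definition normalize_pt :: "int \<times> int \<Rightarrow> int \<times> int" where
  "normalize_pt v = (case v of (p,q) \<Rightarrow>
     (if q < 0 \<or> (q = 0 \<and> p < 0) then (-p, -q) else (p, q)))"

text \<open>Action of the element of PSL(2,Z) represented by the matrix [[a,b],[c,d]]
  (with ad - bc = 1) by Moebius transformations z \<mapsto> (az+b)/(cz+d).\<close>

definition mob :: "int \<Rightarrow> int \<Rightarrow> int \<Rightarrow> int \<Rightarrow> int \<times> int \<Rightarrow> int \<times> int" where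
  "mob a b c d v = (case v of (p,q) \<Rightarrow> normalize_pt (a*p + b*q, c*p + d*q))"

definition farey_adj :: "int \<times> int \<Rightarrow> int \<times> int \<Rightarrow> bool" where
  "farey_adj x y = (x \<in> qp1 \<and> y \<in> qp1 \<and> \<bar>fst x * snd y - snd x * fst y\<bar> = 1)"

definition farey_edge :: "(int \<times> int) set \<Rightarrow> bool" where
  "farey_edge e = (\<exists>x y. e = {x, y} \<and> farey_adj x y)"

definition farey_triangle :: "(int \<times> int) set \<Rightarrow> bool" where
  "farey_triangle t = (\<exists>x y z. t = {x, y, z} \<and> farey_adj x y \<and> farey_adj y z \<and> farey_adj x z)"

text \<open>Edges of the dual tree T correspond to Farey edges; the quadribone of a Farey edge is
  the set of vertices of the two ideal triangles adjacent along it.\<close>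

definition quadribone :: "(int \<times> int) set \<Rightarrow> (int \<times> int) set" where
  "quadribone e = \<Union>{t. farey_triangle t \<and> e \<subseteq> t}"

text \<open>Two edges of T meet (share a vertex of T) iff the corresponding Farey edges are
  sides of a common ideal triangle.\<close>

definition T_adjacent :: "(int \<times> int) set \<Rightarrow> (int \<times> int) set \<Rightarrow> bool" where
  "T_adjacent e f = (\<exists>t. farey_triangle t \<and> e \<subseteq> t \<and> f \<subseteq> t)"

definition T_connected :: "(int \<times> int) set set \<Rightarrow> bool" where
  "T_connected S = ((\<forall>e\<in>S. farey_edge e) \<and>
     (\<forall>e\<in>S. \<forall>f\<in>S. (e, f) \<in> {(e', f'). e' \<in> S \<and> f' \<in> S \<and> T_adjacent e' f'}\<^sup>*))"

definition connected_B :: "(int \<times> int) set \<Rightarrow> bool" where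
  "connected_B A = (\<exists>S. T_connected S \<and> A = \<Union>(quadribone ` S))"

text \<open>Vanishing sequence for a map g on B (discrete topology: compact = finite).\<close>

definition vanishing_seq :: "(int \<times> int \<Rightarrow> int \<times> int) \<Rightarrow> (nat \<Rightarrow> (int \<times> int) set) \<Rightarrow> bool" where
  "vanishing_seq g V =
    ((\<forall>n. V n \<subseteq> qp1 \<and> V n \<noteq> {}) \<and>
     (\<forall>n. V (Suc n) \<subseteq> V n) \<and>
     (\<Inter>n. V n) = {} \<and>
     (\<forall>K. K \<subseteq> qp1 \<and> finite K \<longrightarrow> (\<forall>n. \<exists>p::nat. (g ^^ p) ` K \<subseteq> V n)))"

end

theory Submission
  imports Defs "HOL-Library.Product_Plus"
begin

text \<open>
  Conjugation by an element of \<open>GL(2,\<int>)\<close>, which acts on the Farey tessellation by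
  automorphisms, turns a hyperbolic matrix of positive trace into one with all entries
  positive; negating the matrix takes care of negative trace. A positive \<open>\<gamma>\<close> maps the arc
  \<open>[0, \<infinity>]\<close> of \<open>QP\<^sup>1\<close> into itself, \<open>\<gamma>\<^sup>-\<^sup>1\<close> maps \<open>[-\<infinity>, 0]\<close> into the open arc
  \<open>(-\<infinity>, 0)\<close>, and the height \<open>|p| + |q|\<close> of \<open>p/q\<close> decreases along an orbit of \<open>\<gamma>\<close>
  (of \<open>\<gamma>\<^sup>-\<^sup>1\<close>) until it enters the first (second) arc. Hence \<open>A = [0, \<infinity>]\<close> and
  \<open>B = \<gamma>\<^sup>-\<^sup>1 [-\<infinity>, 0]\<close> are disjoint, invariant and absorbing for \<open>\<gamma>\<close> and \<open>\<gamma>\<^sup>-\<^sup>1\<close>,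
  and \<open>U\<^sub>n\<^sup>+ = \<gamma>\<^sup>n A\<close>, \<open>U\<^sub>n\<^sup>- = \<gamma>\<^sup>-\<^sup>n B\<close> vanish: a point of every \<open>\<gamma>\<^sup>n A\<close> would be sent
  by a suitable \<open>\<gamma>\<^sup>-\<^sup>p\<close> into both \<open>A\<close> and \<open>B\<close>. The arc \<open>[0, \<infinity>]\<close> is connected: it is
  the union of the quadribones of the Farey edges inside it other than \<open>{0, \<infinity>}\<close>, and
  the Stern-Brocot descent \<open>{x, y} \<mapsto> {x, y - x}\<close> links all these edges.
\<close>

section \<open>The Moebius action on primitive vectors\<close>

definition lin :: "int \<Rightarrow> int \<Rightarrow> int \<Rightarrow> int \<Rightarrow> int \<times> int \<Rightarrow> int \<times> int" where
  "lin a b c d v = (a * fst v + b * snd v, c * fst v + d * snd v)"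

definition cross :: "int \<times> int \<Rightarrow> int \<times> int \<Rightarrow> int" where
  "cross x y = fst x * snd y - snd x * fst y"

lemma mob_eq_normalize_lin: "mob a b c d v = normalize_pt (lin a b c d v)"
  by (cases v) (simp add: mob_def lin_def)

lemma lin_uminus: "lin a b c d (- v) = - lin a b c d v"
  by (simp add: lin_def)

lemma normalize_pt_cases: "normalize_pt v = v \<or> normalize_pt v = - v"
  by (cases v) (auto simp: normalize_pt_def)

lemma normalize_pt_uminus: "normalize_pt (- v) = normalize_pt v"
  by (cases v) (auto simp: normalize_pt_def)

lemma normalize_pt_qp1: "v \<in> qp1 \<Longrightarrow> normalize_pt v = v"
  by (cases v) (auto simp: normalize_pt_def qp1_def)

lemma normalize_pt_in_qp1:
  assumes "coprime (fst v) (snd v)"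
  shows "normalize_pt v \<in> qp1"
proof -
  let ?w = "normalize_pt v"
  have cop: "coprime (fst ?w) (snd ?w)"
    using assms by (cases v) (simp add: normalize_pt_def)
  have "0 \<le> snd ?w \<and> (snd ?w = 0 \<longrightarrow> 0 \<le> fst ?w)"
    by (cases v) (auto simp: normalize_pt_def)
  moreover have "snd ?w = 0 \<Longrightarrow> \<bar>fst ?w\<bar> = 1"
    using cop by simp
  ultimately show ?thesis
    using cop by (cases ?w) (auto simp: qp1_def)
qed

lemma mob_normalize_pt: "mob a b c d (normalize_pt v) = mob a b c d v"
  using normalize_pt_cases[of v] by (auto simp: mob_eq_normalize_lin lin_uminus normalize_pt_uminus)

lemma mob_mob: "mob a b c d (mob e f g h v) = mob (a*e+b*g) (a*f+b*h) (c*e+d*g) (c*f+d*h) v"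
  by (simp add: mob_eq_normalize_lin[of e] mob_normalize_pt)
     (simp add: mob_eq_normalize_lin lin_def algebra_simps)

lemma mob_uminus: "mob (-a) (-b) (-c) (-d) = mob a b c d"
proof
  fix v
  have "lin (-a) (-b) (-c) (-d) v = - lin a b c d v"
    by (simp add: lin_def)
  then show "mob (-a) (-b) (-c) (-d) v = mob a b c d v"
    by (simp add: mob_eq_normalize_lin normalize_pt_uminus)
qed

lemma cross_lin: "cross (lin a b c d x) (lin a b c d y) = (a*d - b*c) * cross x y"
  by (simp add: cross_def lin_def algebra_simps)

lemma abs_cross_normalize_pt: "\<bar>cross (normalize_pt x) (normalize_pt y)\<bar> = \<bar>cross x y\<bar>"
  using normalize_pt_cases[of x] normalize_pt_cases[of y] by (auto simp: cross_def algebra_simps)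

lemma abs_cross_mob:
  "\<bar>a*d - b*c\<bar> = 1 \<Longrightarrow> \<bar>cross (mob a b c d x) (mob a b c d y)\<bar> = \<bar>cross x y\<bar>"
  by (simp add: mob_eq_normalize_lin abs_cross_normalize_pt cross_lin abs_mult)

lemma coprime_if_abs_cross_eq_1:
  assumes "\<bar>cross y x\<bar> = 1"
  shows "coprime (fst x) (snd x)"
proof (rule coprimeI)
  fix k assume "k dvd fst x" "k dvd snd x"
  then have "k dvd \<bar>cross y x\<bar>" by (simp add: cross_def)
  with assms show "is_unit k" by simp
qed

lemma ex_cross_eq_1_if_coprime:
  assumes "coprime (fst x) (snd x)"
  obtains y where "cross y x = 1"
proof -
  obtain u v where "u * fst x + v * snd x = 1"
    using bezout_int[of "fst x" "snd x"] assms by auto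
  then have "cross (v, - u) x = 1"
    by (simp add: cross_def algebra_simps)
  then show ?thesis by (rule that)
qed

lemma farey_adj_iff_cross: "farey_adj x y \<longleftrightarrow> x \<in> qp1 \<and> y \<in> qp1 \<and> \<bar>cross x y\<bar> = 1"
  by (simp add: farey_adj_def cross_def)

lemma mob_in_qp1:
  assumes "\<bar>a*d - b*c\<bar> = 1" "x \<in> qp1"
  shows "mob a b c d x \<in> qp1"
proof -
  have "coprime (fst x) (snd x)"
    using assms(2) by (auto simp: qp1_def)
  then obtain y where "cross y x = 1"
    by (rule ex_cross_eq_1_if_coprime)
  then have "\<bar>cross (lin a b c d y) (lin a b c d x)\<bar> = 1"
    using assms(1) by (simp add: cross_lin abs_mult)
  then have "coprime (fst (lin a b c d x)) (snd (lin a b c d x))"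
    by (rule coprime_if_abs_cross_eq_1)
  then show ?thesis
    unfolding mob_eq_normalize_lin by (rule normalize_pt_in_qp1)
qed

lemma mob_id: "x \<in> qp1 \<Longrightarrow> mob 1 0 0 1 x = x"
  by (simp add: mob_eq_normalize_lin lin_def normalize_pt_qp1)

lemma mob_inverse:
  assumes "\<bar>a*d - b*c\<bar> = 1" "x \<in> qp1"
  shows "mob d (-b) (-c) a (mob a b c d x) = x"
proof -
  have "mob d (-b) (-c) a (mob a b c d x) = mob (a*d - b*c) 0 0 (a*d - b*c) x"
    by (simp add: mob_mob algebra_simps)
  moreover have "mob (-1) 0 0 (-1) = mob 1 0 0 1"
    using mob_uminus[of 1 0 0 1] by simp
  moreover have "a*d - b*c = 1 \<or> a*d - b*c = -1"
    using assms(1) by arith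
  ultimately show ?thesis
    using mob_id[OF assms(2)] by auto
qed

section \<open>Automorphisms of the Farey tessellation\<close>

definition farey_aut :: "(int \<times> int \<Rightarrow> int \<times> int) \<Rightarrow> (int \<times> int \<Rightarrow> int \<times> int) \<Rightarrow> bool" where
  "farey_aut \<phi> \<psi> \<longleftrightarrow>
     (\<forall>x\<in>qp1. \<phi> x \<in> qp1 \<and> \<psi> x \<in> qp1 \<and> \<psi> (\<phi> x) = x \<and> \<phi> (\<psi> x) = x) \<and>
     (\<forall>x\<in>qp1. \<forall>y\<in>qp1. farey_adj (\<phi> x) (\<phi> y) \<longleftrightarrow> farey_adj x y)"

lemma farey_aut_inverse:
  assumes "farey_aut \<phi> \<psi>" "x \<in> qp1"
  shows "\<phi> x \<in> qp1" "\<psi> x \<in> qp1" "\<psi> (\<phi> x) = x" "\<phi> (\<psi> x) = x"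
  using assms unfolding farey_aut_def by simp_all

lemma farey_aut_sym: "farey_aut \<phi> \<psi> \<Longrightarrow> farey_aut \<psi> \<phi>"
  unfolding farey_aut_def by metis

lemma farey_aut_funpow: "farey_aut \<phi> \<psi> \<Longrightarrow> farey_aut (\<phi> ^^ n) (\<psi> ^^ n)"
proof (induction n)
  case 0
  then show ?case by (simp add: farey_aut_def)
next
  case (Suc n)
  then show ?case
    unfolding farey_aut_def by (simp add: funpow_swap1)
qed

lemma farey_aut_mob:
  assumes "\<bar>a*d - b*c\<bar> = 1"
  shows "farey_aut (mob a b c d) (mob d (-b) (-c) a)"
proof -
  have det': "\<bar>d*a - (-b)*(-c)\<bar> = 1"
    using assms by (simp add: algebra_simps)
  show ?thesis
    unfolding farey_aut_def farey_adj_iff_cross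
    using mob_in_qp1[OF assms] mob_in_qp1[OF det'] mob_inverse[OF assms]
      mob_inverse[OF det'] abs_cross_mob[OF assms]
    by simp
qed

lemma farey_adj_sym: "farey_adj x y \<Longrightarrow> farey_adj y x"
  by (auto simp: farey_adj_def algebra_simps abs_minus_commute)

lemma farey_triangle_subset_qp1: "farey_triangle t \<Longrightarrow> t \<subseteq> qp1"
  unfolding farey_triangle_def farey_adj_def by blast

lemma farey_edge_subset_qp1: "farey_edge e \<Longrightarrow> e \<subseteq> qp1"
  unfolding farey_edge_def farey_adj_def by blast

lemma farey_aut_farey_adj:
  "farey_aut \<phi> \<psi> \<Longrightarrow> farey_adj x y \<Longrightarrow> farey_adj (\<phi> x) (\<phi> y)"
  unfolding farey_aut_def by (metis farey_adj_def)

lemma farey_aut_triangle: "farey_aut \<phi> \<psi> \<Longrightarrow> farey_triangle t \<Longrightarrow> farey_triangle (\<phi> ` t)"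
  unfolding farey_triangle_def using farey_aut_farey_adj
  by (metis image_empty image_insert)

lemma farey_aut_edge: "farey_aut \<phi> \<psi> \<Longrightarrow> farey_edge e \<Longrightarrow> farey_edge (\<phi> ` e)"
  unfolding farey_edge_def using farey_aut_farey_adj
  by (metis image_empty image_insert)

lemma farey_aut_image_image:
  assumes "farey_aut \<phi> \<psi>" "A \<subseteq> qp1"
  shows "\<psi> ` \<phi> ` A = A"
proof -
  have "\<psi> (\<phi> x) = x" if "x \<in> A" for x
    using farey_aut_inverse(3)[OF assms(1)] assms(2) that by blast
  then show ?thesis
    by (simp add: image_image)
qed

lemma farey_aut_quadribone:
  assumes aut: "farey_aut \<phi> \<psi>" and e: "farey_edge e"
  shows "quadribone (\<phi> ` e) = \<phi> ` quadribone e"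
proof
  show "\<phi> ` quadribone e \<subseteq> quadribone (\<phi> ` e)"
    unfolding quadribone_def using farey_aut_triangle[OF aut] by blast
next
  show "quadribone (\<phi> ` e) \<subseteq> \<phi> ` quadribone e"
  proof
    fix w assume "w \<in> quadribone (\<phi> ` e)"
    then obtain t where t: "farey_triangle t" "\<phi> ` e \<subseteq> t" "w \<in> t"
      unfolding quadribone_def by blast
    have "e \<subseteq> \<psi> ` t"
      using image_mono[OF t(2), of \<psi>] farey_aut_image_image[OF aut farey_edge_subset_qp1[OF e]]
      by simp
    then have "\<psi> w \<in> quadribone e"
      unfolding quadribone_def using farey_aut_triangle[OF farey_aut_sym[OF aut] t(1)] t(3)
      by blast
    moreover have "\<phi> (\<psi> w) = w"
      using farey_aut_inverse(4)[OF aut] farey_triangle_subset_qp1[OF t(1)] t(3) by blast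
    ultimately show "w \<in> \<phi> ` quadribone e"
      by (metis imageI)
  qed
qed

lemma rtrancl_map:
  assumes "\<And>x y. (x, y) \<in> r \<Longrightarrow> (f x, f y) \<in> s" and "(x, y) \<in> r\<^sup>*"
  shows "(f x, f y) \<in> s\<^sup>*"
  using assms(2) by induction (auto intro: rtrancl_into_rtrancl assms(1))

definition T_adj_rel :: "(int \<times> int) set set \<Rightarrow> ((int \<times> int) set \<times> (int \<times> int) set) set" where
  "T_adj_rel S = {(e, f). e \<in> S \<and> f \<in> S \<and> T_adjacent e f}"

lemma T_connected_iff:
  "T_connected S \<longleftrightarrow> (\<forall>e\<in>S. farey_edge e) \<and> (\<forall>e\<in>S. \<forall>f\<in>S. (e, f) \<in> (T_adj_rel S)\<^sup>*)"
  by (simp add: T_connected_def T_adj_rel_def)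

lemma T_connectedI_base:
  assumes "\<forall>e\<in>S. farey_edge e" and "\<And>e. e \<in> S \<Longrightarrow> (e, e\<^sub>0) \<in> (T_adj_rel S)\<^sup>*"
  shows "T_connected S"
proof -
  have "(T_adj_rel S)\<inverse> = T_adj_rel S"
    unfolding T_adj_rel_def T_adjacent_def by blast
  then have "(e\<^sub>0, f) \<in> (T_adj_rel S)\<^sup>*" if "f \<in> S" for f
    using rtrancl_converseI[OF assms(2)[OF that]] by simp
  then show ?thesis
    unfolding T_connected_iff using assms by (meson rtrancl_trans)
qed

lemma connected_B_image:
  assumes aut: "farey_aut \<phi> \<psi>" and "connected_B A"
  shows "connected_B (\<phi> ` A)"
proof -
  obtain S where S: "T_connected S" "A = \<Union>(quadribone ` S)"
    using assms(2) connected_B_def by blast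
  have edges: "\<forall>e\<in>S. farey_edge e"
    using S(1) T_connected_iff by blast
  have "(image \<phi> e, image \<phi> f) \<in> (T_adj_rel (image \<phi> ` S))\<^sup>*" if "e \<in> S" "f \<in> S" for e f
  proof (rule rtrancl_map[where f = "image \<phi>"])
    show "(e, f) \<in> (T_adj_rel S)\<^sup>*"
      using S(1) that unfolding T_connected_iff by blast
    show "(image \<phi> e', image \<phi> f') \<in> T_adj_rel (image \<phi> ` S)" if "(e', f') \<in> T_adj_rel S" for e' f'
      using that farey_aut_triangle[OF aut] unfolding T_adj_rel_def T_adjacent_def by blast
  qed
  then have "T_connected (image \<phi> ` S)"
    using edges farey_aut_edge[OF aut] unfolding T_connected_iff by blast
  moreover have "\<phi> ` A = \<Union>(quadribone ` image \<phi> ` S)"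
    using S(2) edges farey_aut_quadribone[OF aut] by (auto simp: image_Union)
  ultimately show ?thesis
    unfolding connected_B_def by blast
qed

section \<open>Attracting pairs and vanishing sequences\<close>

definition attracting :: "(int \<times> int \<Rightarrow> int \<times> int) \<Rightarrow> (int \<times> int) set \<Rightarrow> bool" where
  "attracting g A \<longleftrightarrow> A \<subseteq> qp1 \<and> g ` A \<subseteq> A \<and> (\<forall>x\<in>qp1. \<exists>p. (g ^^ p) x \<in> A)"

definition attracting_pair ::
    "(int \<times> int \<Rightarrow> int \<times> int) \<Rightarrow> (int \<times> int \<Rightarrow> int \<times> int) \<Rightarrow>
     (int \<times> int) set \<Rightarrow> (int \<times> int) set \<Rightarrow> bool" where
  "attracting_pair g g' A B \<longleftrightarrow>
     farey_aut g g' \<and> attracting g A \<and> attracting g' B \<and> A \<inter> B = {} \<and>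
     connected_B A \<and> connected_B B"

lemma funpow_in_if_image_subset: "g ` A \<subseteq> A \<Longrightarrow> x \<in> A \<Longrightarrow> (g ^^ n) x \<in> A"
  by (induction n) auto

lemma ex_funpow_image_subset:
  assumes "g ` A \<subseteq> A" "\<And>x. x \<in> K \<Longrightarrow> \<exists>p. (g ^^ p) x \<in> A" "finite K"
  shows "\<exists>P. (g ^^ P) ` K \<subseteq> A"
proof -
  obtain p where p: "\<And>x. x \<in> K \<Longrightarrow> (g ^^ p x) x \<in> A"
    using assms(2) by metis
  have "(g ^^ sum p K) x \<in> A" if "x \<in> K" for x
  proof -
    have "p x \<le> sum p K"
      using member_le_sum[OF that _ assms(3)] by blast
    then have "sum p K = (sum p K - p x) + p x"
      by simp
    then have "(g ^^ sum p K) x = (g ^^ (sum p K - p x)) ((g ^^ p x) x)"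
      by (metis comp_apply funpow_add)
    then show ?thesis
      using funpow_in_if_image_subset[OF assms(1) p[OF that]] by simp
  qed
  then show ?thesis by blast
qed

lemma funpow_conj:
  assumes "g' ` X \<subseteq> X" "\<And>y. y \<in> X \<Longrightarrow> g (h y) = h (g' y)" "y \<in> X"
  shows "(g ^^ n) (h y) = h ((g' ^^ n) y)"
proof (induction n)
  case 0
  then show ?case by simp
next
  case (Suc n)
  have "(g ^^ Suc n) (h y) = g (h ((g' ^^ n) y))"
    using Suc.IH by simp
  also have "\<dots> = h ((g' ^^ Suc n) y)"
    using assms(2)[OF funpow_in_if_image_subset[OF assms(1,3)]] by simp
  finally show ?case .
qed

lemma attracting_nonempty:
  assumes "attracting g A"
  shows "A \<noteq> {}"
proof -
  have "(1, 0) \<in> qp1"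
    by (simp add: qp1_def)
  then obtain p where "(g ^^ p) (1, 0) \<in> A"
    using assms unfolding attracting_def by blast
  then show ?thesis by blast
qed

lemma attracting_image:
  assumes "attracting g A"
  shows "attracting g (g ` A)"
proof -
  have A: "A \<subseteq> qp1" "g ` A \<subseteq> A" "\<forall>x\<in>qp1. \<exists>p. (g ^^ p) x \<in> A"
    using assms unfolding attracting_def by simp_all
  have "\<exists>p. (g ^^ p) x \<in> g ` A" if x: "x \<in> qp1" for x
  proof -
    obtain p where "(g ^^ p) x \<in> A"
      using A(3) x by blast
    then have "(g ^^ Suc p) x \<in> g ` A"
      by simp
    then show ?thesis ..
  qed
  moreover have "g ` g ` A \<subseteq> g ` A"
    using A(2) by (rule image_mono)
  ultimately show ?thesis
    unfolding attracting_def using A(1,2) by simp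
qed

lemma attracting_conj:
  assumes att: "attracting g' A" and g': "g' ` qp1 \<subseteq> qp1" and h: "farey_aut h h'"
    and conj: "\<And>y. y \<in> qp1 \<Longrightarrow> g (h y) = h (g' y)"
  shows "attracting g (h ` A)"
  unfolding attracting_def
proof (intro conjI ballI)
  have A: "A \<subseteq> qp1" "g' ` A \<subseteq> A" "\<forall>x\<in>qp1. \<exists>p. (g' ^^ p) x \<in> A"
    using att unfolding attracting_def by auto
  note hq = farey_aut_inverse[OF h]
  show "h ` A \<subseteq> qp1"
    using A(1) hq(1) by blast
  have "g (h y) \<in> h ` A" if "y \<in> A" for y
    using A(1,2) conj[of y] that by blast
  then show "g ` h ` A \<subseteq> h ` A"
    by blast
  fix x assume x: "x \<in> qp1"
  then obtain p where "(g' ^^ p) (h' x) \<in> A"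
    using A(3) hq(2) by blast
  moreover have "(g ^^ p) (h (h' x)) = h ((g' ^^ p) (h' x))"
    using funpow_conj[where g = g and h = h, OF g' conj hq(2)[OF x]] by simp
  ultimately show "\<exists>p. (g ^^ p) x \<in> h ` A"
    using hq(4)[OF x] by (metis imageI)
qed

lemma farey_aut_conj_inverse:
  assumes g: "farey_aut g gi" and g': "farey_aut g' gi'" and h: "h ` qp1 \<subseteq> qp1"
    and conj: "\<And>y. y \<in> qp1 \<Longrightarrow> g (h y) = h (g' y)" and y: "y \<in> qp1"
  shows "gi (h y) = h (gi' y)"
proof -
  have y': "gi' y \<in> qp1" "g' (gi' y) = y"
    using farey_aut_inverse(2,4)[OF g' y] by simp_all
  then have "gi (h y) = gi (g (h (gi' y)))"
    using conj by metis
  also have "\<dots> = h (gi' y)"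
    using farey_aut_inverse(3)[OF g] h y'(1) by blast
  finally show ?thesis .
qed

lemma attracting_pair_conj:
  assumes pair: "attracting_pair g' gi' A B" and g: "farey_aut g gi" and h: "farey_aut h h'"
    and conj: "\<And>y. y \<in> qp1 \<Longrightarrow> g (h y) = h (g' y)"
  shows "attracting_pair g gi (h ` A) (h ` B)"
proof -
  have g': "farey_aut g' gi'" and att: "attracting g' A" "attracting gi' B"
    and AB: "A \<inter> B = {}" and conn: "connected_B A" "connected_B B"
    using pair unfolding attracting_pair_def by auto
  have self_maps: "g' ` qp1 \<subseteq> qp1" "gi' ` qp1 \<subseteq> qp1" "h ` qp1 \<subseteq> qp1"
    using g' h unfolding farey_aut_def by auto
  have conj': "gi (h y) = h (gi' y)" if "y \<in> qp1" for y
    using farey_aut_conj_inverse[OF g g' self_maps(3) conj that] .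
  have "inj_on h qp1"
    using h unfolding farey_aut_def by (metis inj_on_inverseI)
  then have "h ` A \<inter> h ` B = {}"
    using AB att unfolding attracting_def by (metis image_empty inj_on_image_Int)
  then show ?thesis
    unfolding attracting_pair_def
    using g attracting_conj[OF att(1) self_maps(1) h conj] attracting_conj[OF att(2) self_maps(2) h conj']
      connected_B_image[OF h] conn
    by blast
qed

lemma vanishing_seq_iterates:
  assumes "attracting_pair g g' A B"
  shows "vanishing_seq g (\<lambda>n. (g ^^ n) ` A)"
proof -
  have aut: "farey_aut g g'" and A: "A \<subseteq> qp1" "A \<noteq> {}" "g ` A \<subseteq> A" "\<forall>x\<in>qp1. \<exists>p. (g ^^ p) x \<in> A"
    and B: "\<forall>x\<in>qp1. \<exists>p. (g' ^^ p) x \<in> B" and AB: "A \<inter> B = {}"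
    using assms attracting_nonempty unfolding attracting_pair_def attracting_def by auto
  have inv: "(g' ^^ p) ((g ^^ p) y) = y" "(g ^^ p) y \<in> qp1" if "y \<in> qp1" for y p
    using farey_aut_inverse(3,1)[OF farey_aut_funpow[OF aut] that] by simp_all
  have decreasing: "(g ^^ Suc n) ` A \<subseteq> (g ^^ n) ` A" for n
    using image_mono[OF A(3), of "g ^^ n"] by (simp only: funpow_Suc_right image_comp)
  have empty: "(\<Inter>n. (g ^^ n) ` A) = {}"
  proof (rule ccontr)
    assume "(\<Inter>n. (g ^^ n) ` A) \<noteq> {}"
    then obtain x where x: "\<And>n. x \<in> (g ^^ n) ` A"
      by blast
    then have "x \<in> qp1"
      using x[of 0] A(1) by auto
    then obtain p where p: "(g' ^^ p) x \<in> B"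
      using B by blast
    obtain y where y: "y \<in> A" "x = (g ^^ p) y"
      using x[of p] by blast
    then have "(g' ^^ p) x = y"
      using inv(1)[of y p] A(1) by auto
    then show False
      using p y(1) AB by blast
  qed
  have "\<exists>P. (g ^^ P) ` K \<subseteq> (g ^^ n) ` A" if K: "K \<subseteq> qp1" "finite K" for K n
  proof -
    obtain P where "(g ^^ P) ` K \<subseteq> A"
      using ex_funpow_image_subset[OF A(3) _ K(2)] A(4) K(1) by blast
    then have "(g ^^ (n + P)) ` K \<subseteq> (g ^^ n) ` A"
      by (auto simp: funpow_add image_comp)
    then show ?thesis ..
  qed
  then show ?thesis
    unfolding vanishing_seq_def using A(1,2) inv(2) decreasing empty by blast
qed

lemma attracting_pair_sym: "attracting_pair g g' A B \<Longrightarrow> attracting_pair g' g B A"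
  unfolding attracting_pair_def using farey_aut_sym by blast

lemma attracting_pair_vanishing_seqs:
  assumes "attracting_pair g g' A B"
  shows "\<exists>Up Um :: nat \<Rightarrow> (int \<times> int) set.
           (\<forall>n. connected_B (Up n)) \<and> (\<forall>n. connected_B (Um n)) \<and>
           vanishing_seq g Up \<and> vanishing_seq g' Um \<and> Up 0 \<inter> Um 0 = {}"
proof (intro exI conjI allI)
  have aut: "farey_aut g g'"
    using assms unfolding attracting_pair_def by blast
  have conn: "connected_B A" "connected_B B"
    using assms unfolding attracting_pair_def by simp_all
  show "connected_B ((g ^^ n) ` A)" for n
    using connected_B_image[OF farey_aut_funpow[OF aut] conn(1)] .
  show "connected_B ((g' ^^ n) ` B)" for n
    using connected_B_image[OF farey_aut_funpow[OF farey_aut_sym[OF aut]] conn(2)] .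
  show "vanishing_seq g (\<lambda>n. (g ^^ n) ` A)"
    using vanishing_seq_iterates[OF assms] .
  show "vanishing_seq g' (\<lambda>n. (g' ^^ n) ` B)"
    using vanishing_seq_iterates[OF attracting_pair_sym[OF assms]] .
  show "(g ^^ 0) ` A \<inter> (g' ^^ 0) ` B = {}"
    using assms unfolding attracting_pair_def by simp
qed

section \<open>The arcs \<open>[0, \<infinity>]\<close> and \<open>[-\<infinity>, 0]\<close>\<close>

definition arc_nonneg :: "(int \<times> int) set" where
  "arc_nonneg = {x \<in> qp1. 0 \<le> fst x * snd x}"

definition arc_nonpos :: "(int \<times> int) set" where
  "arc_nonpos = {x \<in> qp1. fst x * snd x \<le> 0}"

definition height :: "int \<times> int \<Rightarrow> int" where
  "height x = \<bar>fst x\<bar> + \<bar>snd x\<bar>"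

lemma arc_nonneg_iff:
  "x \<in> arc_nonneg \<longleftrightarrow> 0 \<le> fst x \<and> 0 \<le> snd x \<and> coprime (fst x) (snd x)"
proof (cases "snd x = 0")
  case True
  then show ?thesis
    by (cases x) (auto simp: arc_nonneg_def qp1_def)
next
  case False
  then show ?thesis
    by (cases x) (auto simp: arc_nonneg_def qp1_def zero_le_mult_iff)
qed

lemma arc_nonpos_cases:
  assumes "x \<in> arc_nonpos"
  shows "fst x \<le> 0 \<and> 0 < snd x \<or> x = (1, 0)"
  using assms by (cases x) (auto simp: arc_nonpos_def qp1_def mult_le_0_iff)

lemma height_arc_nonneg: "x \<in> arc_nonneg \<Longrightarrow> height x = fst x + snd x"
  by (simp add: arc_nonneg_iff height_def)

lemma height_pos_arc_nonneg:
  assumes "x \<in> arc_nonneg"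
  shows "0 < height x"
proof -
  have "x \<noteq> (0, 0)"
    using assms by (auto simp: arc_nonneg_iff)
  with assms show ?thesis
    by (cases x) (auto simp: arc_nonneg_iff height_def)
qed

lemma fst_mult_snd_normalize_pt: "fst (normalize_pt v) * snd (normalize_pt v) = fst v * snd v"
  using normalize_pt_cases[of v] by auto

lemma height_normalize_pt: "height (normalize_pt v) = height v"
  using normalize_pt_cases[of v] by (auto simp: height_def)

lemma arc_nonpos_eq_image: "arc_nonpos = mob (-1) 0 0 1 ` arc_nonneg"
proof -
  let ?r = "mob (-1) 0 0 1"
  have r: "farey_aut ?r ?r"
    using farey_aut_mob[of "-1" 1 0 0] mob_uminus[of 1 0 0 "-1"] by simp
  have prod: "fst (?r x) * snd (?r x) = - (fst x * snd x)" for x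
    by (simp add: mob_eq_normalize_lin fst_mult_snd_normalize_pt lin_def)
  show ?thesis
  proof
    show "?r ` arc_nonneg \<subseteq> arc_nonpos"
      using farey_aut_inverse(1)[OF r] prod by (auto simp: arc_nonneg_def arc_nonpos_def)
    show "arc_nonpos \<subseteq> ?r ` arc_nonneg"
    proof
      fix y assume y: "y \<in> arc_nonpos"
      then have "?r y \<in> arc_nonneg" "?r (?r y) = y"
        using farey_aut_inverse[OF r] prod[of y] by (auto simp: arc_nonneg_def arc_nonpos_def)
      then show "y \<in> ?r ` arc_nonneg"
        by (metis imageI)
    qed
  qed
qed

text \<open>The edge \<open>{\<infinity>, 0}\<close> is left out: its quadribone contains \<open>-1\<close>.\<close>

definition arc_nonneg_edges :: "(int \<times> int) set set" where
  "arc_nonneg_edges =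
     {{x, y} | x y. farey_adj x y \<and> x \<in> arc_nonneg \<and> y \<in> arc_nonneg} - {{(1, 0), (0, 1)}}"

lemma nonneg_unimodular_fst_le:
  fixes p q p' q' :: int
  assumes "0 \<le> p" "0 \<le> q" "0 \<le> p'" "0 \<le> q'" "\<bar>p * q' - q * p'\<bar> = 1" "p + q < p' + q'"
  shows "p \<le> p'"
proof (rule ccontr)
  assume "\<not> p \<le> p'"
  then have le: "p' + 1 \<le> p" "q + 1 \<le> q'"
    using assms by auto
  have "(p' + 1) * (q + 1) \<le> p * q'"
    using mult_mono[OF le] assms by auto
  then have ge: "p' + q + 1 \<le> p * q' - q * p'"
    by (simp add: algebra_simps)
  then have "p * q' - q * p' = 1"
    using assms by linarith
  moreover have "p' = 0" "q = 0"
    using ge calculation assms by auto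
  ultimately have "p * q' = 1" "p' = 0" "q = 0"
    by simp_all
  then show False
    using assms by (auto simp: zmult_eq_1_iff)
qed

lemma farey_adj_arc_nonneg_le:
  assumes "x \<in> arc_nonneg" "y \<in> arc_nonneg" "farey_adj x y" "height x < height y"
  shows "fst x \<le> fst y \<and> snd x \<le> snd y"
proof -
  obtain p q p' q' where xy: "x = (p, q)" "y = (p', q')"
    by (cases x, cases y)
  have "0 \<le> p" "0 \<le> q" "0 \<le> p'" "0 \<le> q'" "\<bar>p * q' - q * p'\<bar> = 1" "p + q < p' + q'"
    using assms by (auto simp: xy arc_nonneg_iff farey_adj_def height_arc_nonneg)
  moreover from this have "\<bar>q * p' - p * q'\<bar> = 1" "q + p < q' + p'"
    by (simp_all add: abs_minus_commute)
  ultimately show ?thesis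
    using nonneg_unimodular_fst_le[of p q p' q'] nonneg_unimodular_fst_le[of q p q' p']
    by (simp add: xy)
qed

lemma farey_adj_arc_nonneg_height_neq:
  assumes "x \<in> arc_nonneg" "y \<in> arc_nonneg" "farey_adj x y" "{x, y} \<noteq> {(1, 0), (0, 1)}"
  shows "height x \<noteq> height y"
proof
  assume eq: "height x = height y"
  obtain p q p' q' where xy: "x = (p, q)" "y = (p', q')"
    by (cases x, cases y)
  have nonneg: "0 \<le> p" "0 \<le> q" "0 \<le> p'" "0 \<le> q'"
    using assms(1,2) by (auto simp: xy arc_nonneg_iff)
  have q': "q' = p + q - p'"
    using eq assms(1,2) by (simp add: xy height_arc_nonneg)
  have "\<bar>(p + q) * (p - p')\<bar> = 1"
    using assms(3) by (simp add: xy q' farey_adj_def algebra_simps)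
  then have "p + q = 1" "\<bar>p - p'\<bar> = 1"
    using nonneg zmult_eq_1_iff[of "p + q" "\<bar>p - p'\<bar>"] by (auto simp: abs_mult)
  then have "{x, y} = {(1, 0), (0, 1)}"
    using nonneg q' by (auto simp: xy)
  with assms(4) show False ..
qed

lemma farey_adj_arc_nonneg_comparable:
  assumes "x \<in> arc_nonneg" "y \<in> arc_nonneg" "farey_adj x y" "{x, y} \<noteq> {(1, 0), (0, 1)}"
  shows "0 \<le> (fst y - fst x) * (snd y - snd x)"
proof -
  have "height x < height y \<or> height y < height x"
    using farey_adj_arc_nonneg_height_neq[OF assms] by linarith
  then show ?thesis
    using farey_adj_arc_nonneg_le[OF assms(1-3)] farey_adj_arc_nonneg_le[OF assms(2,1) farey_adj_sym[OF assms(3)]]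
    by (auto simp: mult_nonpos_nonpos)
qed

lemma farey_adj_arc_nonneg_sub:
  assumes x: "x \<in> arc_nonneg" and y: "y \<in> arc_nonneg" and adj: "farey_adj x y"
    and lt: "height x < height y"
  shows "y - x \<in> arc_nonneg" "farey_adj x (y - x)" "farey_triangle {x, y - x, y}"
    "height (y - x) = height y - height x"
proof -
  have le: "fst x \<le> fst y \<and> snd x \<le> snd y"
    using farey_adj_arc_nonneg_le[OF x y adj lt] .
  have cross: "cross x (y - x) = cross x y" "cross (y - x) y = - cross x y"
    by (simp_all add: cross_def algebra_simps)
  have unimodular: "\<bar>cross x y\<bar> = 1"
    using adj by (simp add: farey_adj_iff_cross)
  show z: "y - x \<in> arc_nonneg"
    using le coprime_if_abs_cross_eq_1[of x "y - x"] cross unimodular by (simp add: arc_nonneg_iff)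
  have q: "x \<in> qp1" "y \<in> qp1" "y - x \<in> qp1"
    using x y z by (simp_all add: arc_nonneg_def)
  show xz: "farey_adj x (y - x)"
    using q cross unimodular by (simp add: farey_adj_iff_cross)
  have "farey_adj (y - x) y"
    using q cross unimodular by (simp add: farey_adj_iff_cross)
  then show "farey_triangle {x, y - x, y}"
    unfolding farey_triangle_def using xz adj by blast
  show "height (y - x) = height y - height x"
    using x y z by (simp add: height_arc_nonneg)
qed

lemma base_edges_arc_nonneg:
  "{(1, 0), (1, 1)} \<in> arc_nonneg_edges" "{(0, 1), (1, 1)} \<in> arc_nonneg_edges"
  unfolding arc_nonneg_edges_def
  by (force simp: arc_nonneg_iff farey_adj_def qp1_def doubleton_eq_iff)+

lemma base_edges_arc_nonneg_adjacent:
  "({(0, 1), (1, 1)}, {(1, 0), (1, 1)}) \<in> T_adj_rel arc_nonneg_edges"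
proof -
  have "farey_triangle {(1, 0), (0, 1), (1, 1)}"
    unfolding farey_triangle_def by (force simp: farey_adj_def qp1_def)
  then show ?thesis
    using base_edges_arc_nonneg unfolding T_adj_rel_def T_adjacent_def by blast
qed

lemma arc_nonneg_edge_chain:
  assumes "farey_adj x y" "x \<in> arc_nonneg" "y \<in> arc_nonneg" "{x, y} \<noteq> {(1, 0), (0, 1)}"
  shows "({x, y}, {(1, 0), (1, 1)}) \<in> (T_adj_rel arc_nonneg_edges)\<^sup>*"
  using assms
proof (induction "nat (height x + height y)" arbitrary: x y rule: less_induct)
  case less
  let ?R = "T_adj_rel arc_nonneg_edges" and ?e1 = "{(1, 0), (1, 1)} :: (int \<times> int) set"
    and ?e2 = "{(0, 1), (1, 1)} :: (int \<times> int) set"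
  have ordered: "({x', y'}, ?e1) \<in> ?R\<^sup>*"
    if xy': "{x', y'} = {x, y}" "farey_adj x' y'" "x' \<in> arc_nonneg" "y' \<in> arc_nonneg"
      "height x' < height y'" for x' y'
  proof (cases "{x', y'} = ?e1 \<or> {x', y'} = ?e2")
    case True
    with base_edges_arc_nonneg_adjacent show ?thesis by auto
  next
    case False
    txt \<open>Pass to the parent edge \<open>{x', y' - x'}\<close> in the Stern-Brocot tree.\<close>
    note sub = farey_adj_arc_nonneg_sub[OF xy'(3,4,2,5)]
    have not_root: "{x', y' - x'} \<noteq> {(1, 0), (0, 1)}"
    proof
      assume "{x', y' - x'} = {(1, 0), (0, 1)}"
      then have "x' = (1, 0) \<and> y' = (1, 1) \<or> x' = (0, 1) \<and> y' = (1, 1)"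
        by (cases y') (auto simp: doubleton_eq_iff)
      with False show False by auto
    qed
    have "nat (height x' + height (y' - x')) < nat (height x + height y)"
      using sub(4) height_pos_arc_nonneg[OF xy'(3)] height_pos_arc_nonneg[OF sub(1)] xy'(1)
      by (auto simp: doubleton_eq_iff)
    then have "({x', y' - x'}, ?e1) \<in> ?R\<^sup>*"
      using less.hyps sub(2,1) xy'(3) not_root by blast
    moreover have "({x', y'}, {x', y' - x'}) \<in> ?R"
      using xy' sub not_root less.prems(4)
      unfolding T_adj_rel_def T_adjacent_def arc_nonneg_edges_def by blast
    ultimately show ?thesis
      by (rule converse_rtrancl_into_rtrancl[rotated])
  qed
  have "height x < height y \<or> height y < height x"
    using farey_adj_arc_nonneg_height_neq[OF less.prems(2,3,1,4)] by linarith
  then show ?case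
    using ordered[of x y] ordered[of y x] less.prems farey_adj_sym by (auto simp: insert_commute)
qed

lemma sign_comb_nonneg:
  fixes A B p q p' q' :: int
  assumes "\<bar>A\<bar> = 1" "\<bar>B\<bar> = 1" "0 \<le> p" "0 \<le> q" "0 \<le> p'" "0 \<le> q'"
    and "0 \<le> (p' - p) * (q' - q)"
  shows "0 \<le> (A * p + B * p') * (A * q + B * q')"
proof -
  have AA: "A * A = 1"
    using assms(1) by (metis abs_mult_self_eq mult_1)
  consider "B = A" | "B = - A"
    using assms(1,2) by (metis abs_eq_iff)
  then show ?thesis
  proof cases
    case 1
    then have "(A * p + B * p') * (A * q + B * q') = (A * A) * ((p + p') * (q + q'))"
      by (simp add: algebra_simps)
    then show ?thesis
      using AA assms(3-6) by simp
  next
    case 2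
    then have "(A * p + B * p') * (A * q + B * q') = (A * A) * ((p' - p) * (q' - q))"
      by (simp add: algebra_simps)
    then show ?thesis
      using AA assms(7) by simp
  qed
qed

lemma farey_triangle_adj:
  "farey_triangle t \<Longrightarrow> u \<in> t \<Longrightarrow> v \<in> t \<Longrightarrow> u \<noteq> v \<Longrightarrow> farey_adj u v"
  unfolding farey_triangle_def using farey_adj_sym by blast

lemma quadribone_arc_nonneg_edge:
  assumes "e \<in> arc_nonneg_edges"
  shows "quadribone e \<subseteq> arc_nonneg"
proof
  fix w assume "w \<in> quadribone e"
  then obtain t where t: "farey_triangle t" "e \<subseteq> t" "w \<in> t"
    unfolding quadribone_def by blast
  obtain x y where e: "e = {x, y}" "farey_adj x y" "x \<in> arc_nonneg" "y \<in> arc_nonneg"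
    "{x, y} \<noteq> {(1, 0), (0, 1)}"
    using assms unfolding arc_nonneg_edges_def by blast
  show "w \<in> arc_nonneg"
  proof (cases "w \<in> e")
    case True
    then show ?thesis using e by auto
  next
    case False
    have "x \<in> t" "y \<in> t" "w \<noteq> x" "w \<noteq> y"
      using t(2) e(1) False by auto
    then have "farey_adj w y" "farey_adj x w"
      using farey_triangle_adj[OF t(1)] t(3) by metis+
    then have unimodular: "\<bar>cross w y\<bar> = 1" "\<bar>cross x w\<bar> = 1" and w: "w \<in> qp1"
      by (simp_all add: farey_adj_iff_cross)
    have "\<bar>cross x y\<bar> = 1"
      using e(2) by (simp add: farey_adj_iff_cross)
    then have square: "cross x y * cross x y = 1"
      by (metis abs_mult_self_eq mult_1)
    txt \<open>Cramer's rule writes \<open>w\<close> as \<open>\<plusminus>x \<plusminus> y\<close>, and \<open>x\<close>, \<open>y\<close> are componentwise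
      comparable.\<close>
    have "cross x y * fst w = cross w y * fst x + cross x w * fst y"
      "cross x y * snd w = cross w y * snd x + cross x w * snd y"
      by (simp_all add: cross_def algebra_simps)
    then have "0 \<le> (cross x y * fst w) * (cross x y * snd w)"
      using sign_comb_nonneg[OF unimodular] farey_adj_arc_nonneg_comparable[OF e(3,4,2,5)] e(3,4)
      by (simp add: arc_nonneg_iff)
    also have "\<dots> = fst w * snd w"
      using square by (simp add: algebra_simps)
    finally show ?thesis
      using w by (simp add: arc_nonneg_def)
  qed
qed

lemma farey_adj_arc_nonneg_triangle:
  assumes adj: "farey_adj x y" and x: "x \<in> arc_nonneg" and y: "y \<in> arc_nonneg"
  shows "farey_triangle {x, y, x + y}"
proof -
  have cross: "cross x (x + y) = cross x y" "cross y (x + y) = - cross x y"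
    by (simp_all add: cross_def algebra_simps)
  have unimodular: "\<bar>cross x y\<bar> = 1"
    using adj by (simp add: farey_adj_iff_cross)
  have "x + y \<in> arc_nonneg"
    using x y coprime_if_abs_cross_eq_1[of x "x + y"] cross unimodular by (simp add: arc_nonneg_iff)
  then have "farey_adj x (x + y)" "farey_adj y (x + y)"
    using x y cross unimodular by (simp_all add: farey_adj_iff_cross arc_nonneg_def)
  then show ?thesis
    unfolding farey_triangle_def using adj by blast
qed

lemma arc_nonneg_point_on_edge:
  assumes w: "w \<in> arc_nonneg"
  shows "\<exists>e\<in>arc_nonneg_edges. w \<in> e"
proof -
  consider "snd w = 0" | "fst w = 0" | "1 \<le> fst w" "1 \<le> snd w"
    using w by (force simp: arc_nonneg_iff)
  then show ?thesis
  proof cases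
    case 1
    then have "w = (1, 0)"
      using w by (cases w) (auto simp: arc_nonneg_iff)
    then show ?thesis
      using base_edges_arc_nonneg(1) by blast
  next
    case 2
    then have "w = (0, 1)"
      using w by (cases w) (auto simp: arc_nonneg_iff)
    then show ?thesis
      using base_edges_arc_nonneg(2) by blast
  next
    case 3
    have "coprime (fst w) (snd w)"
      using w by (simp add: arc_nonneg_iff)
    then obtain y\<^sub>0 where y\<^sub>0: "cross y\<^sub>0 w = 1"
      by (rule ex_cross_eq_1_if_coprime)
    define k where "k = \<bar>fst y\<^sub>0\<bar> + \<bar>snd y\<^sub>0\<bar>"
    define y where "y = (fst y\<^sub>0 + k * fst w, snd y\<^sub>0 + k * snd w)"
    have "0 \<le> k"
      by (simp add: k_def)
    then have "k \<le> k * fst w" "k \<le> k * snd w"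
      using 3 by (simp_all add: mult_le_cancel_left1)
    moreover have "- fst y\<^sub>0 \<le> k" "- snd y\<^sub>0 \<le> k"
      by (simp_all add: k_def)
    ultimately have "0 \<le> fst y" "0 \<le> snd y"
      by (simp_all add: y_def)
    moreover have cross: "cross w y = -1"
      using y\<^sub>0 by (simp add: y_def cross_def algebra_simps)
    ultimately have "y \<in> arc_nonneg"
      using coprime_if_abs_cross_eq_1[of w y] by (simp add: arc_nonneg_iff)
    moreover have "{w, y} \<noteq> {(1, 0), (0, 1)}"
      using 3 by (auto simp: doubleton_eq_iff)
    moreover have "farey_adj w y"
      using w \<open>y \<in> arc_nonneg\<close> cross by (simp add: farey_adj_iff_cross arc_nonneg_def)
    ultimately have "{w, y} \<in> arc_nonneg_edges"
      using w unfolding arc_nonneg_edges_def by blast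
    then show ?thesis by blast
  qed
qed

lemma quadribones_arc_nonneg_edges: "\<Union>(quadribone ` arc_nonneg_edges) = arc_nonneg"
proof
  show "\<Union>(quadribone ` arc_nonneg_edges) \<subseteq> arc_nonneg"
    using quadribone_arc_nonneg_edge by blast
  show "arc_nonneg \<subseteq> \<Union>(quadribone ` arc_nonneg_edges)"
  proof
    fix w assume "w \<in> arc_nonneg"
    then obtain e where e: "e \<in> arc_nonneg_edges" "w \<in> e"
      using arc_nonneg_point_on_edge by blast
    then obtain x y where "e = {x, y}" "farey_adj x y" "x \<in> arc_nonneg" "y \<in> arc_nonneg"
      unfolding arc_nonneg_edges_def by blast
    then have "w \<in> quadribone e"
      using farey_adj_arc_nonneg_triangle e(2) unfolding quadribone_def by blast
    with e(1) show "w \<in> \<Union>(quadribone ` arc_nonneg_edges)"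
      by blast
  qed
qed

lemma connected_B_arc_nonneg: "connected_B arc_nonneg"
proof -
  have "\<forall>e\<in>arc_nonneg_edges. farey_edge e"
    unfolding arc_nonneg_edges_def farey_edge_def by blast
  moreover have "(e, {(1, 0), (1, 1)}) \<in> (T_adj_rel arc_nonneg_edges)\<^sup>*" if "e \<in> arc_nonneg_edges" for e
    using that arc_nonneg_edge_chain unfolding arc_nonneg_edges_def by blast
  ultimately have "T_connected arc_nonneg_edges"
    by (rule T_connectedI_base)
  then show ?thesis
    unfolding connected_B_def using quadribones_arc_nonneg_edges by blast
qed

section \<open>Matrices with positive entries\<close>

lemma ex_funpow_in_by_descent:
  fixes \<mu> :: "'a \<Rightarrow> nat"
  assumes closed: "\<And>x. x \<in> X \<Longrightarrow> g x \<in> X"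
    and descent: "\<And>x. x \<in> X \<Longrightarrow> x \<notin> A \<Longrightarrow> g x \<notin> A \<Longrightarrow> \<mu> (g x) < \<mu> x"
    and "x \<in> X"
  shows "\<exists>p. (g ^^ p) x \<in> A"
  using \<open>x \<in> X\<close>
proof (induction "\<mu> x" arbitrary: x rule: less_induct)
  case less
  consider "x \<in> A" | "g x \<in> A" | "x \<notin> A" "g x \<notin> A"
    by blast
  then show ?case
  proof cases
    case 1
    then have "(g ^^ 0) x \<in> A" by simp
    then show ?thesis ..
  next
    case 2
    then have "(g ^^ 1) x \<in> A" by simp
    then show ?thesis ..
  next
    case 3
    then obtain p where "(g ^^ p) (g x) \<in> A"
      using less descent closed by blast
    then have "(g ^^ Suc p) x \<in> A"
      by (simp only: funpow_Suc_right comp_apply)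
    then show ?thesis ..
  qed
qed

lemma abs_add_le_abs_diff_scaled:
  fixes s t u v :: int
  assumes "1 \<le> s" "1 \<le> t" "u * v \<le> 0"
  shows "\<bar>u\<bar> + \<bar>v\<bar> \<le> \<bar>s * u - t * v\<bar>"
proof -
  consider "0 \<le> u" "v \<le> 0" | "u \<le> 0" "0 \<le> v"
    using assms(3) by (auto simp: mult_le_0_iff)
  then show ?thesis
  proof cases
    case 1
    then have "u \<le> s * u" "t * v \<le> v"
      using mult_right_mono[of 1 s u] mult_right_mono_neg[of 1 t v] assms(1,2) by simp_all
    then show ?thesis
      using 1 by linarith
  next
    case 2
    then have "s * u \<le> u" "v \<le> t * v"
      using mult_right_mono_neg[of 1 s u] mult_right_mono[of 1 t v] assms(1,2) by simp_all
    then show ?thesis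
      using 2 by linarith
  qed
qed

lemma abs_add_le_abs_add_scaled:
  fixes s t u v :: int
  assumes "1 \<le> s" "1 \<le> t" "0 \<le> u * v"
  shows "\<bar>u\<bar> + \<bar>v\<bar> \<le> \<bar>s * u + t * v\<bar>"
  using abs_add_le_abs_diff_scaled[OF assms(1,2), of u "- v"] assms(3) by simp

context
  fixes a b c d :: int
  assumes pos: "1 \<le> a" "1 \<le> b" "1 \<le> c" "1 \<le> d" and det: "a * d - b * c = 1"
begin

lemma mob_pos_eq: "mob a b c d x = normalize_pt (a * fst x + b * snd x, c * fst x + d * snd x)"
  by (simp add: mob_eq_normalize_lin lin_def)

lemma mob_pos_inv_eq: "mob d (-b) (-c) a x = normalize_pt (d * fst x - b * snd x, a * snd x - c * fst x)"
  by (simp add: mob_eq_normalize_lin lin_def)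

lemma mob_pos_farey_aut: "farey_aut (mob a b c d) (mob d (-b) (-c) a)"
  using farey_aut_mob det by simp

lemma mob_pos_image_arc_nonneg: "mob a b c d ` arc_nonneg \<subseteq> arc_nonneg"
proof
  fix y assume "y \<in> mob a b c d ` arc_nonneg"
  then obtain x where x: "x \<in> arc_nonneg" "y = mob a b c d x" by blast
  then have "y \<in> qp1"
    using farey_aut_inverse(1)[OF mob_pos_farey_aut] by (simp add: arc_nonneg_def)
  moreover have "0 \<le> (a * fst x + b * snd x) * (c * fst x + d * snd x)"
    using x(1) pos by (simp add: arc_nonneg_iff)
  ultimately show "y \<in> arc_nonneg"
    by (simp add: x(2) mob_pos_eq fst_mult_snd_normalize_pt arc_nonneg_def)
qed

lemma mob_pos_inv_arc_nonpos:
  assumes "x \<in> arc_nonpos"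
  shows "fst (mob d (-b) (-c) a x) * snd (mob d (-b) (-c) a x) < 0"
proof -
  have "d * fst x - b * snd x < 0 \<and> 0 < a * snd x - c * fst x \<or> x = (1, 0)"
  proof (cases "x = (1, 0)")
    case False
    then have "fst x \<le> 0" "0 < snd x"
      using arc_nonpos_cases[OF assms] by auto
    then have "d * fst x \<le> 0" "c * fst x \<le> 0" "0 < b * snd x" "0 < a * snd x"
      using pos by (simp_all add: mult_nonneg_nonpos)
    then show ?thesis by linarith
  qed simp
  then show ?thesis
    using pos by (auto simp: mob_pos_inv_eq fst_mult_snd_normalize_pt mult_less_0_iff)
qed

lemma height_mob_pos_lt:
  assumes "x \<in> qp1" "x \<notin> arc_nonneg" "mob a b c d x \<notin> arc_nonneg"
  shows "height (mob a b c d x) < height x"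
proof -
  define u where "u = a * fst x + b * snd x"
  define v where "v = c * fst x + d * snd x"
  have "mob a b c d x \<in> qp1"
    using farey_aut_inverse(1)[OF mob_pos_farey_aut assms(1)] .
  then have uv: "u * v < 0"
    using assms(3) by (simp add: mob_pos_eq fst_mult_snd_normalize_pt arc_nonneg_def u_def v_def)
  have "d * u - b * v = (a * d - b * c) * fst x" "a * v - c * u = (a * d - b * c) * snd x"
    by (simp_all add: u_def v_def algebra_simps)
  then have "fst x = d * u - b * v" "snd x = a * v - c * u"
    by (simp_all add: det)
  then have "\<bar>u\<bar> + \<bar>v\<bar> \<le> \<bar>fst x\<bar>" "\<bar>u\<bar> + \<bar>v\<bar> \<le> \<bar>snd x\<bar>"
    using abs_add_le_abs_diff_scaled[of d b u v] abs_add_le_abs_diff_scaled[of a c v u] pos uv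
    by (simp_all add: mult.commute)
  moreover have "0 < \<bar>u\<bar>"
    using uv by auto
  moreover have "height (mob a b c d x) = \<bar>u\<bar> + \<bar>v\<bar>"
    by (simp only: mob_pos_eq height_normalize_pt) (simp add: height_def u_def v_def)
  ultimately show ?thesis
    by (simp only: height_def) linarith
qed

lemma height_mob_pos_inv_lt:
  assumes "x \<in> qp1" "x \<notin> arc_nonpos" "mob d (-b) (-c) a x \<notin> arc_nonpos"
  shows "height (mob d (-b) (-c) a x) < height x"
proof -
  define u where "u = d * fst x - b * snd x"
  define v where "v = a * snd x - c * fst x"
  have "mob d (-b) (-c) a x \<in> qp1"
    using farey_aut_inverse(2)[OF mob_pos_farey_aut assms(1)] .
  then have uv: "0 < u * v"
    using assms(3) by (simp add: mob_pos_inv_eq fst_mult_snd_normalize_pt arc_nonpos_def u_def v_def)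
  have "a * u + b * v = (a * d - b * c) * fst x" "c * u + d * v = (a * d - b * c) * snd x"
    by (simp_all add: u_def v_def algebra_simps)
  then have "fst x = a * u + b * v" "snd x = c * u + d * v"
    by (simp_all add: det)
  then have "\<bar>u\<bar> + \<bar>v\<bar> \<le> \<bar>fst x\<bar>" "\<bar>u\<bar> + \<bar>v\<bar> \<le> \<bar>snd x\<bar>"
    using abs_add_le_abs_add_scaled[of a b u v] abs_add_le_abs_add_scaled[of c d u v] pos uv
    by simp_all
  moreover have "0 < \<bar>u\<bar>"
    using uv by auto
  moreover have "height (mob d (-b) (-c) a x) = \<bar>u\<bar> + \<bar>v\<bar>"
    by (simp only: mob_pos_inv_eq height_normalize_pt) (simp add: height_def u_def v_def)
  ultimately show ?thesis
    by (simp only: height_def) linarith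
qed

lemma attracting_arc_nonneg: "attracting (mob a b c d) arc_nonneg"
  unfolding attracting_def
proof (intro conjI ballI)
  show "arc_nonneg \<subseteq> qp1"
    by (auto simp: arc_nonneg_def)
  show "mob a b c d ` arc_nonneg \<subseteq> arc_nonneg"
    by (rule mob_pos_image_arc_nonneg)
  show "\<exists>p. (mob a b c d ^^ p) x \<in> arc_nonneg" if "x \<in> qp1" for x
  proof (rule ex_funpow_in_by_descent[where \<mu> = "\<lambda>x. nat (height x)"])
    show "mob a b c d y \<in> qp1" if "y \<in> qp1" for y
      using farey_aut_inverse(1)[OF mob_pos_farey_aut that] .
    show "nat (height (mob a b c d y)) < nat (height y)"
      if "y \<in> qp1" "y \<notin> arc_nonneg" "mob a b c d y \<notin> arc_nonneg" for y
      using height_mob_pos_lt[OF that] by (simp add: nat_less_eq_zless height_def)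
  qed (rule that)
qed

lemma attracting_arc_nonpos: "attracting (mob d (-b) (-c) a) arc_nonpos"
  unfolding attracting_def
proof (intro conjI ballI)
  show "arc_nonpos \<subseteq> qp1"
    by (auto simp: arc_nonpos_def)
  show "mob d (-b) (-c) a ` arc_nonpos \<subseteq> arc_nonpos"
    using mob_pos_inv_arc_nonpos farey_aut_inverse(2)[OF mob_pos_farey_aut]
    by (force simp: arc_nonpos_def)
  show "\<exists>p. (mob d (-b) (-c) a ^^ p) x \<in> arc_nonpos" if "x \<in> qp1" for x
  proof (rule ex_funpow_in_by_descent[where \<mu> = "\<lambda>x. nat (height x)"])
    show "mob d (-b) (-c) a y \<in> qp1" if "y \<in> qp1" for y
      using farey_aut_inverse(2)[OF mob_pos_farey_aut that] .
    show "nat (height (mob d (-b) (-c) a y)) < nat (height y)"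
      if "y \<in> qp1" "y \<notin> arc_nonpos" "mob d (-b) (-c) a y \<notin> arc_nonpos" for y
      using height_mob_pos_inv_lt[OF that] by (simp add: nat_less_eq_zless height_def)
  qed (rule that)
qed

lemma attracting_pair_positive:
  "attracting_pair (mob a b c d) (mob d (-b) (-c) a) arc_nonneg (mob d (-b) (-c) a ` arc_nonpos)"
  unfolding attracting_pair_def
proof (intro conjI)
  show "arc_nonneg \<inter> mob d (-b) (-c) a ` arc_nonpos = {}"
    using mob_pos_inv_arc_nonpos by (force simp: arc_nonneg_def)
  have "connected_B arc_nonpos"
    unfolding arc_nonpos_eq_image
    using connected_B_image[OF farey_aut_mob connected_B_arc_nonneg, of "-1" 1 0 0] by simp
  then show "connected_B (mob d (-b) (-c) a ` arc_nonpos)"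
    using connected_B_image[OF farey_aut_sym[OF mob_pos_farey_aut]] by blast
qed (simp_all add: mob_pos_farey_aut attracting_arc_nonneg attracting_image attracting_arc_nonpos
    connected_B_arc_nonneg)

end

section \<open>Conjugation into positive matrices\<close>

type_synonym mat2 = "int \<times> int \<times> int \<times> int"

fun mat_mult :: "mat2 \<Rightarrow> mat2 \<Rightarrow> mat2" where
  "mat_mult (a, b, c, d) (e, f, g, h) = (a*e + b*g, a*f + b*h, c*e + d*g, c*f + d*h)"

fun mat_det :: "mat2 \<Rightarrow> int" where
  "mat_det (a, b, c, d) = a*d - b*c"

definition gl2_conj :: "mat2 \<Rightarrow> mat2 \<Rightarrow> bool" where
  "gl2_conj M N \<longleftrightarrow> (\<exists>H. \<bar>mat_det H\<bar> = 1 \<and> mat_mult M H = mat_mult H N)"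

lemma mat_mult_assoc: "mat_mult (mat_mult L M) N = mat_mult L (mat_mult M N)"
  by (cases L, cases M, cases N) (simp add: algebra_simps)

lemma mat_det_mult: "mat_det (mat_mult M N) = mat_det M * mat_det N"
  by (cases M, cases N) (simp add: algebra_simps)

lemma gl2_conj_trans:
  assumes "gl2_conj L M" "gl2_conj M N"
  shows "gl2_conj L N"
proof -
  obtain H K where H: "\<bar>mat_det H\<bar> = 1" "mat_mult L H = mat_mult H M"
    and K: "\<bar>mat_det K\<bar> = 1" "mat_mult M K = mat_mult K N"
    using assms unfolding gl2_conj_def by blast
  have "mat_mult L (mat_mult H K) = mat_mult (mat_mult H M) K"
    by (simp only: H(2) flip: mat_mult_assoc)
  also have "\<dots> = mat_mult H (mat_mult K N)"
    by (simp only: K(2) mat_mult_assoc)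
  finally have "mat_mult L (mat_mult H K) = mat_mult (mat_mult H K) N"
    by (simp only: mat_mult_assoc)
  moreover have "\<bar>mat_det (mat_mult H K)\<bar> = 1"
    using H(1) K(1) by (simp add: mat_det_mult abs_mult)
  ultimately show ?thesis
    unfolding gl2_conj_def by blast
qed

lemma gl2_conj_refl: "gl2_conj M M"
  unfolding gl2_conj_def by (rule exI[of _ "(1, 0, 0, 1)"]) (cases M, simp)

lemma gl2_conj_shear: "gl2_conj (a, b, c, d) (a - k*c, b + k*a - k*k*c - k*d, c, d + k*c)"
  unfolding gl2_conj_def by (rule exI[of _ "(1, k, 0, 1)"]) (simp add: algebra_simps)

lemma gl2_conj_reflect: "gl2_conj (a, b, c, d) (a, -b, -c, d)"
  unfolding gl2_conj_def by (rule exI[of _ "(-1, 0, 0, 1)"]) simp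

lemma gl2_conj_swap: "gl2_conj (a, b, c, d) (d, -c, -b, a)"
  unfolding gl2_conj_def by (rule exI[of _ "(0, -1, 1, 0)"]) simp

lemma abs_lt_if_det_eq_1:
  fixes a b c d :: int
  assumes det: "a * d - b * c = 1" and a: "1 \<le> a" "a \<le> c" and d: "\<bar>d\<bar> \<le> c - 1" and c: "2 \<le> c"
  shows "\<bar>b\<bar> < c"
proof -
  have bc: "b * c = a * d - 1"
    using det by linarith
  have "\<bar>b\<bar> * c = \<bar>a * d - 1\<bar>"
    using c by (simp add: abs_mult flip: bc)
  also have "\<dots> \<le> a * \<bar>d\<bar> + 1"
    using abs_triangle_ineq4[of "a * d" 1] a by (simp add: abs_mult)
  also have "\<dots> \<le> c * (c - 1) + 1"
    using mult_mono[OF a(2) d] a by simp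
  also have "\<dots> < c * c"
    using c by (simp add: algebra_simps)
  finally show ?thesis
    using c by (simp add: mult_less_cancel_right)
qed

text \<open>A shear brings the upper-left entry into \<open>[1, c]\<close>. If \<open>c < a + d\<close> all entries are
  then positive; otherwise \<open>|b| < c\<close>, and the swap makes \<open>-b\<close> the lower-left entry.\<close>

lemma gl2_conj_reduce_step:
  assumes det: "a*d - b*c = 1" and tr: "3 \<le> a + d" and c: "0 < c"
  obtains a' b' c' d' where "gl2_conj (a, b, c, d) (a', b', c', d')" "a'*d' - b'*c' = 1"
    "a' + d' = a + d" "1 \<le> a' \<and> 1 \<le> b' \<and> 1 \<le> c' \<and> 1 \<le> d' \<or> \<bar>c'\<bar> < c"
proof -
  define k where "k = (a - 1) div c"
  define a1 where "a1 = a - k*c"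
  define b1 where "b1 = b + k*a - k*k*c - k*d"
  define d1 where "d1 = d + k*c"
  have conj: "gl2_conj (a, b, c, d) (a1, b1, c, d1)"
    unfolding a1_def b1_def d1_def by (rule gl2_conj_shear)
  have "a1*d1 - b1*c = a*d - b*c"
    by (simp add: a1_def b1_def d1_def algebra_simps)
  then have det1: "a1*d1 - b1*c = 1"
    using det by simp
  have "a1 = 1 + (a - 1) mod c"
    using div_mult_mod_eq[of "a - 1" c] by (simp add: a1_def k_def algebra_simps)
  then have a1: "1 \<le> a1" "a1 \<le> c"
    using c pos_mod_bound[of c "a - 1"] pos_mod_sign[of c "a - 1"] by linarith+
  have tr1: "a1 + d1 = a + d"
    by (simp add: a1_def d1_def)
  show ?thesis
  proof (cases "c < a + d")
    case True
    then have "1 \<le> d1" "0 \<le> (a1 - 1) * (d1 - 1)"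
      using a1 tr1 by simp_all
    then have "1 \<le> b1 * c"
      using det1 tr1 tr by (simp add: algebra_simps)
    then have "0 < b1"
      using zero_less_mult_pos2[of b1 c] c by simp
    with a1 c \<open>1 \<le> d1\<close> show ?thesis
      by (intro that[OF conj det1 tr1]) simp
  next
    case False
    then have "\<bar>-b1\<bar> < c"
      using abs_lt_if_det_eq_1[OF det1 a1] a1 tr1 tr by simp
    moreover have "gl2_conj (a, b, c, d) (d1, -c, -b1, a1)"
      using gl2_conj_trans[OF conj gl2_conj_swap] .
    moreover have "d1*a1 - (-c)*(-b1) = 1" "d1 + a1 = a + d"
      using det1 tr1 by (simp_all add: algebra_simps)
    ultimately show ?thesis
      using that[of d1 "-c" "-b1" a1] by blast
  qed
qed

lemma gl2_conj_lower_left_pos: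
  assumes det: "a*d - b*c = 1" and tr: "3 \<le> a + d"
  obtains b' c' where "gl2_conj (a, b, c, d) (a, b', c', d)" "a*d - b'*c' = 1" "0 < c'"
    "\<bar>c'\<bar> = \<bar>c\<bar>"
proof (cases "0 < c")
  case True
  then show ?thesis
    using that gl2_conj_refl det by blast
next
  case False
  have "c \<noteq> 0"
  proof
    assume "c = 0"
    then have "a = 1 \<and> d = 1 \<or> a = -1 \<and> d = -1"
      using det by (simp add: zmult_eq_1_iff)
    with tr show False by auto
  qed
  with False show ?thesis
    using that[OF gl2_conj_reflect[of a b c d]] det by simp
qed

lemma gl2_conj_positive:
  assumes "a*d - b*c = 1" "3 \<le> a + d"
  shows "\<exists>a' b' c' d'. gl2_conj (a, b, c, d) (a', b', c', d') \<and> a'*d' - b'*c' = 1 \<and>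
    1 \<le> a' \<and> 1 \<le> b' \<and> 1 \<le> c' \<and> 1 \<le> d'"
  using assms
proof (induction "nat \<bar>c\<bar>" arbitrary: a b c d rule: less_induct)
  case less
  obtain b\<^sub>0 c\<^sub>0 where conj0: "gl2_conj (a, b, c, d) (a, b\<^sub>0, c\<^sub>0, d)"
    and det0: "a*d - b\<^sub>0*c\<^sub>0 = 1" and c0: "0 < c\<^sub>0" "\<bar>c\<^sub>0\<bar> = \<bar>c\<bar>"
    using gl2_conj_lower_left_pos[OF less.prems] .
  obtain a' b' c' d' where conj': "gl2_conj (a, b\<^sub>0, c\<^sub>0, d) (a', b', c', d')"
    and det': "a'*d' - b'*c' = 1" and tr': "a' + d' = a + d"
    and cases: "1 \<le> a' \<and> 1 \<le> b' \<and> 1 \<le> c' \<and> 1 \<le> d' \<or> \<bar>c'\<bar> < c\<^sub>0"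
    using gl2_conj_reduce_step[OF det0 less.prems(2) c0(1)] .
  have conj: "gl2_conj (a, b, c, d) (a', b', c', d')"
    using gl2_conj_trans[OF conj0 conj'] .
  show ?case
  proof (cases "\<bar>c'\<bar> < c\<^sub>0")
    case True
    then have "nat \<bar>c'\<bar> < nat \<bar>c\<bar>"
      using c0 by simp
    moreover have "3 \<le> a' + d'"
      using tr' less.prems(2) by simp
    ultimately obtain a'' b'' c'' d'' where "gl2_conj (a', b', c', d') (a'', b'', c'', d'')"
      "a''*d'' - b''*c'' = 1" "1 \<le> a''" "1 \<le> b''" "1 \<le> c''" "1 \<le> d''"
      using less.hyps det' by blast
    then show ?thesis
      using gl2_conj_trans[OF conj] by blast
  next
    case False
    then show ?thesis
      using cases conj det' by blast
  qed
qed

lemma attracting_pair_hyperbolic: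
  assumes det: "a*d - b*c = 1" and tr: "3 \<le> a + d"
  shows "\<exists>A B. attracting_pair (mob a b c d) (mob d (-b) (-c) a) A B"
proof -
  obtain a' b' c' d' where conj: "gl2_conj (a, b, c, d) (a', b', c', d')"
    and det': "a'*d' - b'*c' = 1" and pos: "1 \<le> a'" "1 \<le> b'" "1 \<le> c'" "1 \<le> d'"
    using gl2_conj_positive[OF det tr] by blast
  obtain e f g h where H: "\<bar>e*h - f*g\<bar> = 1"
    "mat_mult (a, b, c, d) (e, f, g, h) = mat_mult (e, f, g, h) (a', b', c', d')"
    using conj unfolding gl2_conj_def by (metis mat_det.simps prod_cases4)
  have comm: "mob a b c d (mob e f g h y) = mob e f g h (mob a' b' c' d' y)" for y
    using H(2) by (simp add: mob_mob)
  have "\<bar>a*d - b*c\<bar> = 1"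
    using det by simp
  then show ?thesis
    using attracting_pair_conj[OF attracting_pair_positive[OF pos det'] farey_aut_mob farey_aut_mob[OF H(1)] comm]
    by blast
qed

theorem mainTheorem7:
  fixes a b c d :: int
  assumes "a * d - b * c = 1"
    and "\<bar>a + d\<bar> > 2"
  shows "\<exists>Up Um :: nat \<Rightarrow> (int \<times> int) set.
           (\<forall>n. connected_B (Up n)) \<and> (\<forall>n. connected_B (Um n)) \<and>
           vanishing_seq (mob a b c d) Up \<and>
           vanishing_seq (mob d (-b) (-c) a) Um \<and>
           Up 0 \<inter> Um 0 = {}"
proof -
  have "\<exists>A B. attracting_pair (mob a b c d) (mob d (-b) (-c) a) A B"
  proof (cases "3 \<le> a + d")
    case True
    with assms(1) show ?thesis
      by (rule attracting_pair_hyperbolic)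
  next
    case False
    then have "3 \<le> (-a) + (-d)" "(-a) * (-d) - (-b) * (-c) = 1"
      using assms by linarith+
    then show ?thesis
      using attracting_pair_hyperbolic[of "-a" "-d" "-b" "-c"] mob_uminus[of a b c d]
        mob_uminus[of d "-b" "-c" a]
      by simp
  qed
  then show ?thesis
    using attracting_pair_vanishing_seqs by blast
qed

end
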